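(* Let $A$ be an associative algebra, $M$ an $A$-bimodule and $\{ T_\alpha: M \to A \}_{\alpha \in \Omega}$ an $\mathcal{O}$-operator family. Then $(M, \{ \prec_\alpha, \succ_\alpha \}_{\alpha \in \Omega})$ is a dendriform family algebra, where $u \prec_\alpha v=u \cdot T_\alpha(v)$ and $u \succ_\alpha v = T_\alpha(u) \cdot v$. Moreover, if $(\phi, \psi)$ is a morphism of $\mathcal{O}$-operator families from $\{ T_\alpha : M \to A \}$ to $\{ T'_\alpha : M' \to A' \}$, then $\psi: M \to M'$ is a morphism between the induced dendriform family algebras.
   Context: $\Omega$ is a semigroup. An $\mathcal{O}$-operator family is a collection of linear maps $T_\alpha:M\to A$ with $T_\alpha(u) \cdot T_\beta(v) = T_{\alpha\beta}(T_\alpha(u) \cdot v + u \cdot T_\beta(v))$. A morphism of $\mathcal{O}$-operator families from $\{T_\alpha:M\to A\}$ to $\{T'_\alpha:M'\to A'\}$ is a pair $(\phi,\psi)$, $\phi:A\to A'$ an algebra homomorphism and $\psi:M\to M'$ linear, with $\psi (a \cdot u) = \phi (a) \cdot' \psi (u)$, $\psi (u \cdot a) = \psi (u) \cdot' \phi (a)$, $\phi \circ T_\alpha = T'_\alpha \circ \psi$ for all $\alpha$. A dendriform family algebra is a vector space $D$ with bilinear maps $\{\prec_\alpha,\succ_\alpha\}_{\alpha\in\Omega}$ satisfying $(x \prec_\alpha y) \prec_\beta z = x \prec_{\alpha \beta} (y \prec_\beta z + y \succ_\alpha z)$, $(x \succ_\alpha y) \prec_\beta z = x \succ_\alpha (y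 \prec_\beta z)$, $(x \prec_\beta y + x \succ_\alpha y) \succ_{\alpha \beta} z = x \succ_\alpha (y \succ_\beta z)$; a morphism of such is a linear map preserving all $\prec_\alpha,\succ_\alpha$. *)

theory Defs
  imports Complex_Main
begin

text \<open>Scalars: a field 'k. An associative (not necessarily unital) algebra is a type of class
  ring with a scalar multiplication sA making it a 'k-vector space and multiplication bilinear.\<close>

definition bilinear_map ::
  "('k::field \<Rightarrow> 'a::ab_group_add \<Rightarrow> 'a) \<Rightarrow> ('k \<Rightarrow> 'b::ab_group_add \<Rightarrow> 'b) \<Rightarrow>
   ('k \<Rightarrow> 'c::ab_group_add \<Rightarrow> 'c) \<Rightarrow> ('a \<Rightarrow> 'b \<Rightarrow> 'c) \<Rightarrow> bool" where
  "bilinear_map s1 s2 s3 f \<longleftrightarrow>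
     (\<forall>y. Vector_Spaces.linear s1 s3 (\<lambda>x. f x y)) \<and> (\<forall>x. Vector_Spaces.linear s2 s3 (\<lambda>y. f x y))"

definition assoc_algebra :: "('k::field \<Rightarrow> 'a::ring \<Rightarrow> 'a) \<Rightarrow> bool" where
  "assoc_algebra sA \<longleftrightarrow> vector_space sA \<and> bilinear_map sA sA sA (*)"

definition bimodule ::
  "('k::field \<Rightarrow> 'a::ring \<Rightarrow> 'a) \<Rightarrow> ('k \<Rightarrow> 'm::ab_group_add \<Rightarrow> 'm) \<Rightarrow>
   ('a \<Rightarrow> 'm \<Rightarrow> 'm) \<Rightarrow> ('m \<Rightarrow> 'a \<Rightarrow> 'm) \<Rightarrow> bool" where
  "bimodule sA sM l r \<longleftrightarrow> vector_space sM \<and> bilinear_map sA sM sM l \<and> bilinear_map sM sA sM r \<and>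
     (\<forall>a b u. l (a * b) u = l a (l b u)) \<and>
     (\<forall>a b u. r (r u a) b = r u (a * b)) \<and>
     (\<forall>a b u. r (l a u) b = l a (r u b))"

definition O_operator_family ::
  "('k::field \<Rightarrow> 'a::ring \<Rightarrow> 'a) \<Rightarrow> ('k \<Rightarrow> 'm::ab_group_add \<Rightarrow> 'm) \<Rightarrow>
   ('a \<Rightarrow> 'm \<Rightarrow> 'm) \<Rightarrow> ('m \<Rightarrow> 'a \<Rightarrow> 'm) \<Rightarrow> ('w::semigroup_mult \<Rightarrow> 'm \<Rightarrow> 'a) \<Rightarrow> bool" where
  "O_operator_family sA sM l r T \<longleftrightarrow>
     (\<forall>\<alpha>. Vector_Spaces.linear sM sA (T \<alpha>)) \<and>
     (\<forall>\<alpha> \<beta> u v. T \<alpha> u * T \<beta> v = T (\<alpha> * \<beta>) (r u (T \<beta> v) + l (T \<alpha> u) v))"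

definition O_family_morphism ::
  "('k::field \<Rightarrow> 'a::ring \<Rightarrow> 'a) \<Rightarrow> ('k \<Rightarrow> 'm::ab_group_add \<Rightarrow> 'm) \<Rightarrow>
   ('a \<Rightarrow> 'm \<Rightarrow> 'm) \<Rightarrow> ('m \<Rightarrow> 'a \<Rightarrow> 'm) \<Rightarrow> ('w::semigroup_mult \<Rightarrow> 'm \<Rightarrow> 'a) \<Rightarrow>
   ('k \<Rightarrow> 'a2::ring \<Rightarrow> 'a2) \<Rightarrow> ('k \<Rightarrow> 'm2::ab_group_add \<Rightarrow> 'm2) \<Rightarrow>
   ('a2 \<Rightarrow> 'm2 \<Rightarrow> 'm2) \<Rightarrow> ('m2 \<Rightarrow> 'a2 \<Rightarrow> 'm2) \<Rightarrow> ('w \<Rightarrow> 'm2 \<Rightarrow> 'a2) \<Rightarrow>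
   ('a \<Rightarrow> 'a2) \<Rightarrow> ('m \<Rightarrow> 'm2) \<Rightarrow> bool" where
  "O_family_morphism sA sM l r T sA' sM' l' r' T' \<phi> \<psi> \<longleftrightarrow>
     Vector_Spaces.linear sA sA' \<phi> \<and> (\<forall>a b. \<phi> (a * b) = \<phi> a * \<phi> b) \<and>
     Vector_Spaces.linear sM sM' \<psi> \<and>
     (\<forall>a u. \<psi> (l a u) = l' (\<phi> a) (\<psi> u)) \<and>
     (\<forall>u a. \<psi> (r u a) = r' (\<psi> u) (\<phi> a)) \<and>
     (\<forall>\<alpha> u. \<phi> (T \<alpha> u) = T' \<alpha> (\<psi> u))"

definition dendriform_family ::
  "('k::field \<Rightarrow> 'd::ab_group_add \<Rightarrow> 'd) \<Rightarrow> ('w::semigroup_mult \<Rightarrow> 'd \<Rightarrow> 'd \<Rightarrow> 'd) \<Rightarrow>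
   ('w \<Rightarrow> 'd \<Rightarrow> 'd \<Rightarrow> 'd) \<Rightarrow> bool" where
  "dendriform_family sD prec succ \<longleftrightarrow> vector_space sD \<and>
     (\<forall>\<alpha>. bilinear_map sD sD sD (prec \<alpha>) \<and> bilinear_map sD sD sD (succ \<alpha>)) \<and>
     (\<forall>\<alpha> \<beta> x y z. prec \<beta> (prec \<alpha> x y) z = prec (\<alpha> * \<beta>) x (prec \<beta> y z + succ \<alpha> y z)) \<and>
     (\<forall>\<alpha> \<beta> x y z. prec \<beta> (succ \<alpha> x y) z = succ \<alpha> x (prec \<beta> y z)) \<and>
     (\<forall>\<alpha> \<beta> x y z. succ (\<alpha> * \<beta>) (prec \<beta> x y + succ \<alpha> x y) z = succ \<alpha> x (succ \<beta> y z))"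

definition dendriform_family_morphism ::
  "('k::field \<Rightarrow> 'd::ab_group_add \<Rightarrow> 'd) \<Rightarrow> ('w::semigroup_mult \<Rightarrow> 'd \<Rightarrow> 'd \<Rightarrow> 'd) \<Rightarrow>
   ('w \<Rightarrow> 'd \<Rightarrow> 'd \<Rightarrow> 'd) \<Rightarrow> ('k \<Rightarrow> 'e::ab_group_add \<Rightarrow> 'e) \<Rightarrow> ('w \<Rightarrow> 'e \<Rightarrow> 'e \<Rightarrow> 'e) \<Rightarrow>
   ('w \<Rightarrow> 'e \<Rightarrow> 'e \<Rightarrow> 'e) \<Rightarrow> ('d \<Rightarrow> 'e) \<Rightarrow> bool" where
  "dendriform_family_morphism sD prec succ sE prec' succ' f \<longleftrightarrow>
     Vector_Spaces.linear sD sE f \<and>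
     (\<forall>\<alpha> x y. f (prec \<alpha> x y) = prec' \<alpha> (f x) (f y)) \<and>
     (\<forall>\<alpha> x y. f (succ \<alpha> x y) = succ' \<alpha> (f x) (f y))"

end

theory Submission
  imports Defs
begin

lemma bilinear_map_compose_right:
  assumes "bilinear_map s1 s2 s3 f" and "Vector_Spaces.linear s0 s2 g"
  shows "bilinear_map s1 s0 s3 (\<lambda>x y. f x (g y))"
  unfolding bilinear_map_def
proof (intro conjI allI)
  fix y show "Vector_Spaces.linear s1 s3 (\<lambda>x. f x (g y))"
    using assms(1) unfolding bilinear_map_def by blast
next
  fix x
  have "Vector_Spaces.linear s0 s3 (f x \<circ> g)"
    using assms unfolding bilinear_map_def by (blast intro: Vector_Spaces.linear_compose)
  then show "Vector_Spaces.linear s0 s3 (\<lambda>y. f x (g y))"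
    by (simp add: comp_def)
qed

lemma bilinear_map_compose_left:
  assumes "bilinear_map s1 s2 s3 f" and "Vector_Spaces.linear s0 s1 g"
  shows "bilinear_map s0 s2 s3 (\<lambda>x y. f (g x) y)"
  unfolding bilinear_map_def
proof (intro conjI allI)
  fix y
  have "Vector_Spaces.linear s0 s3 ((\<lambda>x. f x y) \<circ> g)"
    using assms unfolding bilinear_map_def by (blast intro: Vector_Spaces.linear_compose)
  then show "Vector_Spaces.linear s0 s3 (\<lambda>x. f (g x) y)"
    by (simp add: comp_def)
next
  fix x show "Vector_Spaces.linear s2 s3 (\<lambda>y. f (g x) y)"
    using assms(1) unfolding bilinear_map_def by blast
qed

lemma O_operator_family_dendriform_family:
  assumes "bimodule sA sM l r" and "O_operator_family sA sM l r T"
  shows "dendriform_family sM (\<lambda>\<alpha> u v. r u (T \<alpha> v)) (\<lambda>\<alpha> u v. l (T \<alpha> u) v)"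
proof -
  from assms have vs: "vector_space sM"
    and l_bilinear: "bilinear_map sA sM sM l" and r_bilinear: "bilinear_map sM sA sM r"
    and l_assoc: "\<And>a b u. l (a * b) u = l a (l b u)"
    and r_assoc: "\<And>a b u. r (r u a) b = r u (a * b)"
    and lr_commute: "\<And>a b u. r (l a u) b = l a (r u b)"
    and T_linear: "\<And>\<alpha>. Vector_Spaces.linear sM sA (T \<alpha>)"
    and T_O_operator: "\<And>\<alpha> \<beta> u v. T \<alpha> u * T \<beta> v = T (\<alpha> * \<beta>) (r u (T \<beta> v) + l (T \<alpha> u) v)"
    unfolding bimodule_def O_operator_family_def by auto
  have prec_prec: "r (r x (T \<alpha> y)) (T \<beta> z) = r x (T (\<alpha> * \<beta>) (r y (T \<beta> z) + l (T \<alpha> y) z))"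
    for \<alpha> \<beta> x y z
    by (simp add: r_assoc T_O_operator)
  have succ_succ: "l (T (\<alpha> * \<beta>) (r x (T \<beta> y) + l (T \<alpha> x) y)) z = l (T \<alpha> x) (l (T \<beta> y) z)"
    for \<alpha> \<beta> x y z
    by (simp add: l_assoc flip: T_O_operator)
  show ?thesis
    unfolding dendriform_family_def
    using vs prec_prec succ_succ lr_commute
      bilinear_map_compose_right[OF r_bilinear T_linear]
      bilinear_map_compose_left[OF l_bilinear T_linear]
    by blast
qed

lemma O_family_morphism_dendriform_family_morphism:
  assumes "O_family_morphism sA sM l r T sA' sM' l' r' T' \<phi> \<psi>"
  shows "dendriform_family_morphism sM (\<lambda>\<alpha> u v. r u (T \<alpha> v)) (\<lambda>\<alpha> u v. l (T \<alpha> u) v)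
           sM' (\<lambda>\<alpha> u v. r' u (T' \<alpha> v)) (\<lambda>\<alpha> u v. l' (T' \<alpha> u) v) \<psi>"
  using assms unfolding O_family_morphism_def dendriform_family_morphism_def by simp

theorem proposition2p16:
  fixes sA :: "'k::field \<Rightarrow> 'a::ring \<Rightarrow> 'a" and sM :: "'k \<Rightarrow> 'm::ab_group_add \<Rightarrow> 'm"
    and l :: "'a \<Rightarrow> 'm \<Rightarrow> 'm" and r :: "'m \<Rightarrow> 'a \<Rightarrow> 'm"
    and T :: "'w::semigroup_mult \<Rightarrow> 'm \<Rightarrow> 'a"
  assumes "assoc_algebra sA" and "bimodule sA sM l r" and "O_operator_family sA sM l r T"
  shows "dendriform_family sM (\<lambda>\<alpha> u v. r u (T \<alpha> v)) (\<lambda>\<alpha> u v. l (T \<alpha> u) v) \<and>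
      (\<forall>(sA' :: 'k \<Rightarrow> 'a2::ring \<Rightarrow> 'a2) (sM' :: 'k \<Rightarrow> 'm2::ab_group_add \<Rightarrow> 'm2)
           (l' :: 'a2 \<Rightarrow> 'm2 \<Rightarrow> 'm2) (r' :: 'm2 \<Rightarrow> 'a2 \<Rightarrow> 'm2) (T' :: 'w \<Rightarrow> 'm2 \<Rightarrow> 'a2)
           (\<phi> :: 'a \<Rightarrow> 'a2) (\<psi> :: 'm \<Rightarrow> 'm2).
         assoc_algebra sA' \<longrightarrow> bimodule sA' sM' l' r' \<longrightarrow> O_operator_family sA' sM' l' r' T' \<longrightarrow>
         O_family_morphism sA sM l r T sA' sM' l' r' T' \<phi> \<psi> \<longrightarrow>
         dendriform_family_morphism sM (\<lambda>\<alpha> u v. r u (T \<alpha> v)) (\<lambda>\<alpha> u v. l (T \<alpha> u) v)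
           sM' (\<lambda>\<alpha> u v. r' u (T' \<alpha> v)) (\<lambda>\<alpha> u v. l' (T' \<alpha> u) v) \<psi>)"
  using O_operator_family_dendriform_family[OF assms(2,3)]
    O_family_morphism_dendriform_family_morphism
  by blast

end
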